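(* Let $A$ be an Archimedean semiprime $f$-algebra and $a\in A$. Then $a^2\le\mu|a|$ for some $\mu\in(0,\infty)$ if and only if for every $x\in A$ there is $\lambda\in(0,\infty)$ with $|ax|\le\lambda|x|$ (i.e., $ax\in A(x)$ for all $x\in A$).
   Context: An $f$-algebra is a real associative algebra that is a vector lattice with $A_+A_+\subseteq A_+$ and such that $a\wedge b=0$ implies $ac\wedge b=ca\wedge b=0$ for all $c\in A_+$; it is semiprime if $0$ is its only nilpotent element. For $x\in A$, $A(x)=\{y\in A: |y|\le\lambda|x|\text{ for some }\lambda\in(0,\infty)\}$. Elements $a$ with $a^2\in A(a)$ are called bounded. *)

theory Defs
  imports Complex_Main
begin

text \<open>A real vector lattice that is also a real (associative, not necessarily unital)
algebra is modelled by the type class combination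
real_algebra + ordered_real_vector + lattice.\<close>

definition labs :: "'a::{ordered_real_vector, lattice} \<Rightarrow> 'a" where
  "labs x = sup x (- x)"

definition archimedean_vl :: "'a::{ordered_real_vector, lattice} itself \<Rightarrow> bool" where
  "archimedean_vl TYPE('a) \<longleftrightarrow>
     (\<forall>x y :: 'a. 0 \<le> x \<and> 0 \<le> y \<and> (\<forall>n::nat. real n *\<^sub>R x \<le> y) \<longrightarrow> x = 0)"

definition f_algebra :: "'a::{real_algebra, ordered_real_vector, lattice} itself \<Rightarrow> bool" where
  "f_algebra TYPE('a) \<longleftrightarrow>
     (\<forall>x y :: 'a. 0 \<le> x \<and> 0 \<le> y \<longrightarrow> 0 \<le> x * y) \<and>
     (\<forall>a b c :: 'a. inf a b = 0 \<and> 0 \<le> c \<longrightarrow> inf (a * c) b = 0 \<and> inf (c * a) b = 0)"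

text \<open>Positive powers in a possibly non-unital algebra: npow x n = x^(n+1).\<close>
fun npow :: "'a::times \<Rightarrow> nat \<Rightarrow> 'a" where
  "npow x 0 = x"
| "npow x (Suc n) = x * npow x n"

definition semiprime :: "'a::{real_algebra} itself \<Rightarrow> bool" where
  "semiprime TYPE('a) \<longleftrightarrow> (\<forall>x :: 'a. (\<exists>n. npow x n = 0) \<longrightarrow> x = 0)"

end

theory Submission
  imports Defs "HOL-Library.Lattice_Algebras"
begin

(* Write a = a+ - a- with disjoint positive and negative parts.  The f-algebra axioms kill the
   cross terms, so |a|^2 = a^2 and |ax| <= |a||x|; hence a^2 <= mu |a| makes u = |a| satisfy
   u^2 <= mu u.  For such a u and any v >= 0, put z = uv - mu v: then uz <= 0 forces u z+ = 0,
   semiprimeness upgrades this to u disjoint from z+, so uv is disjoint from z+ <= uv, i.e.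
   z+ = 0 and uv <= mu v.  Applied to v = |x| this gives |ax| <= mu |x|.  The converse is the
   case x = a. *)

(* The sort {ordered_real_vector, lattice} is not a subclass of lattice_ab_group_add_abs, so the
   library's facts about pprt, nprt and abs are reached through this locale instance. *)
lemma lattice_ab_group_add_abs_labs:
  "class.lattice_ab_group_add_abs (labs :: 'a::{ordered_real_vector, lattice} \<Rightarrow> 'a)
     (+) 0 (-) uminus (\<le>) (<) inf sup"
  by unfold_locales (auto simp: labs_def less_le_not_le add_left_mono)

definition pos_part :: "'a::{ordered_real_vector, lattice} \<Rightarrow> 'a" where
  "pos_part x = sup x 0"

definition neg_part :: "'a::{ordered_real_vector, lattice} \<Rightarrow> 'a" where
  "neg_part x = sup (- x) 0"

lemma pos_part_nonneg: "0 \<le> pos_part x"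
  by (simp add: pos_part_def)

lemma neg_part_nonneg: "0 \<le> neg_part x"
  by (simp add: neg_part_def)

lemma pos_part_le_iff: "pos_part x \<le> y \<longleftrightarrow> x \<le> y \<and> 0 \<le> y"
  by (simp add: pos_part_def)

lemma pos_part_eq_0_iff: "pos_part x = 0 \<longleftrightarrow> x \<le> 0"
  by (simp add: pos_part_def sup_absorb2 sup.absorb_iff2)

lemma labs_le_iff: "labs x \<le> y \<longleftrightarrow> x \<le> y \<and> - x \<le> y"
  by (simp add: labs_def)

lemma pos_neg_part_decomposition:
  fixes x :: "'a::{ordered_real_vector, lattice}"
  shows pos_minus_neg_part: "pos_part x - neg_part x = x"
    and labs_eq_pos_plus_neg_part: "labs x = pos_part x + neg_part x"
    and inf_pos_neg_part: "inf (pos_part x) (neg_part x) = 0"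
proof -
  interpret lattice_ab_group_add_abs labs "(+)" "0::'a" "(-)" uminus "(\<le>)" "(<)" inf sup
    by (fact lattice_ab_group_add_abs_labs)
  have pos: "pos_part x = pprt x" and neg: "neg_part x = - nprt x"
    by (simp_all add: pos_part_def neg_part_def pprt_def flip: pprt_neg)
  show "pos_part x - neg_part x = x"
    using prts[of x] by (simp add: pos neg)
  show "labs x = pos_part x + neg_part x"
    by (simp add: pos neg abs_prts)
  have "inf (pos_part x) (neg_part x) = inf (x + neg_part x) (0 + neg_part x)"
    using \<open>pos_part x - neg_part x = x\<close> by (simp add: diff_eq_eq)
  also have "\<dots> = nprt x + neg_part x"
    by (simp only: nprt_def add_inf_distrib_right)
  finally show "inf (pos_part x) (neg_part x) = 0"
    by (simp add: neg)
qed

lemma labs_nonneg: "0 \<le> labs x"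
  by (simp add: labs_eq_pos_plus_neg_part pos_part_nonneg neg_part_nonneg)

lemma f_algebra_mult_nonneg:
  fixes x y :: "'a::{real_algebra, ordered_real_vector, lattice}"
  assumes "f_algebra TYPE('a)" and "0 \<le> x" and "0 \<le> y"
  shows "0 \<le> x * y"
  using assms unfolding f_algebra_def by blast

lemma f_algebra_disjoint_mult:
  fixes a b c :: "'a::{real_algebra, ordered_real_vector, lattice}"
  assumes "f_algebra TYPE('a)" and "inf a b = 0" and "0 \<le> c"
  shows "inf (a * c) b = 0" and "inf (c * a) b = 0"
  using assms unfolding f_algebra_def by blast+

lemma f_algebra_mult_left_mono:
  fixes a b c :: "'a::{real_algebra, ordered_real_vector, lattice}"
  assumes "f_algebra TYPE('a)" and "a \<le> b" and "0 \<le> c"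
  shows "c * a \<le> c * b"
  using f_algebra_mult_nonneg[OF assms(1) assms(3), of "b - a"] assms(2)
  by (simp add: algebra_simps)

lemma f_algebra_mult_right_mono:
  fixes a b c :: "'a::{real_algebra, ordered_real_vector, lattice}"
  assumes "f_algebra TYPE('a)" and "a \<le> b" and "0 \<le> c"
  shows "a * c \<le> b * c"
  using f_algebra_mult_nonneg[OF assms(1) _ assms(3), of "b - a"] assms(2)
  by (simp add: algebra_simps)

lemma f_algebra_disjoint_imp_mult_eq_0:
  fixes x y :: "'a::{real_algebra, ordered_real_vector, lattice}"
  assumes fa: "f_algebra TYPE('a)" and xy: "inf x y = 0"
  shows "x * y = 0"
proof -
  have "0 \<le> x" "0 \<le> y"
    using xy by (metis inf_le1, metis inf_le2)
  have "inf x (x * y) = 0"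
    using f_algebra_disjoint_mult(2)[OF fa _ \<open>0 \<le> x\<close>, of y] xy by (simp add: inf_commute)
  then have "inf (x * y) (x * y) = 0"
    using f_algebra_disjoint_mult(1)[OF fa _ \<open>0 \<le> y\<close>] by blast
  then show ?thesis
    by simp
qed

lemma f_algebra_labs_mult_self:
  fixes a :: "'a::{real_algebra, ordered_real_vector, lattice}"
  assumes fa: "f_algebra TYPE('a)"
  shows "labs a * labs a = a * a"
proof -
  define p n where "p = pos_part a" and "n = neg_part a"
  have la: "labs a = p + n" and a: "a = p - n"
    unfolding p_def n_def by (simp_all only: labs_eq_pos_plus_neg_part pos_minus_neg_part)
  have "p * n = 0" "n * p = 0"
    using inf_pos_neg_part[of a] unfolding p_def n_def
    by (auto intro: f_algebra_disjoint_imp_mult_eq_0[OF fa] simp: inf_commute)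
  then have "(p + n) * (p + n) = (p - n) * (p - n)"
    by (simp add: algebra_simps)
  then show ?thesis
    unfolding la by (simp only: a)
qed

lemma f_algebra_labs_mult_le:
  fixes a x :: "'a::{real_algebra, ordered_real_vector, lattice}"
  assumes fa: "f_algebra TYPE('a)"
  shows "labs (a * x) \<le> labs a * labs x"
proof -
  define p n q r where "p = pos_part a" and "n = neg_part a"
    and "q = pos_part x" and "r = neg_part x"
  have la: "labs a = p + n" and a: "a = p - n" and lx: "labs x = q + r" and x: "x = q - r"
    unfolding p_def n_def q_def r_def
    by (simp_all only: labs_eq_pos_plus_neg_part pos_minus_neg_part)
  have "0 \<le> p * q" "0 \<le> p * r" "0 \<le> n * q" "0 \<le> n * r"
    unfolding p_def n_def q_def r_def
    by (simp_all add: f_algebra_mult_nonneg[OF fa] pos_part_nonneg neg_part_nonneg)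
  moreover have "labs a * labs x - a * x = (p * r + n * q) + (p * r + n * q)"
    and "labs a * labs x + a * x = (p * q + n * r) + (p * q + n * r)"
    unfolding la lx by (simp_all only: a x) (simp_all add: algebra_simps)
  ultimately have "0 \<le> labs a * labs x - a * x" "0 \<le> labs a * labs x + a * x"
    by (metis add_nonneg_nonneg)+
  then show ?thesis
    unfolding labs_le_iff by (metis diff_ge_0_iff_ge diff_minus_eq_add)
qed

lemma f_algebra_mult_pos_part_eq_0:
  fixes u z :: "'a::{real_algebra, ordered_real_vector, lattice}"
  assumes fa: "f_algebra TYPE('a)" and u: "0 \<le> u" and uz: "u * z \<le> 0"
  shows "u * pos_part z = 0"
proof -
  define p n where "p = pos_part z" and "n = neg_part z"
  have "u * p - u * n = u * z"
    unfolding p_def n_def by (simp only: pos_minus_neg_part flip: right_diff_distrib)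
  then have "u * p \<le> u * n"
    using uz by (metis diff_le_0_iff_le)
  have "inf (u * n) p = 0"
    using f_algebra_disjoint_mult(2)[OF fa _ u, of n p] inf_pos_neg_part[of z]
    unfolding p_def n_def by (simp add: inf_commute)
  moreover have "inf (u * p) p \<le> inf (u * n) p"
    using \<open>u * p \<le> u * n\<close> by (simp add: le_infI1)
  moreover have "0 \<le> inf (u * p) p"
    using f_algebra_mult_nonneg[OF fa u pos_part_nonneg] pos_part_nonneg
    unfolding p_def by simp
  ultimately have "inf p (u * p) = 0"
    by (metis order_antisym inf_commute)
  then have "inf (u * p) (u * p) = 0"
    by (rule f_algebra_disjoint_mult(2)[OF fa _ u])
  then show ?thesis
    by (simp add: p_def)
qed

lemma semiprime_mult_self_eq_0:
  fixes x :: "'a::real_algebra"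
  assumes "semiprime TYPE('a)" and "x * x = 0"
  shows "x = 0"
proof -
  have "npow x 1 = 0"
    using assms(2) by simp
  then show ?thesis
    using assms(1) unfolding semiprime_def by blast
qed

lemma semiprime_f_algebra_mult_eq_0_imp_disjoint:
  fixes u v :: "'a::{real_algebra, ordered_real_vector, lattice}"
  assumes fa: "f_algebra TYPE('a)" and sp: "semiprime TYPE('a)"
    and u: "0 \<le> u" and v: "0 \<le> v" and uv: "u * v = 0"
  shows "inf u v = 0"
proof -
  define w where "w = inf u v"
  have w: "0 \<le> w"
    using u v by (simp add: w_def)
  have "w * w \<le> u * w"
    by (rule f_algebra_mult_right_mono[OF fa _ w]) (simp add: w_def)
  also have "\<dots> \<le> u * v"
    by (rule f_algebra_mult_left_mono[OF fa _ u]) (simp add: w_def)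
  finally have "w * w = 0"
    using uv f_algebra_mult_nonneg[OF fa w w] by (simp add: order_antisym)
  then show ?thesis
    using semiprime_mult_self_eq_0[OF sp] unfolding w_def by blast
qed

lemma semiprime_f_algebra_mult_le_scaleR:
  fixes u v :: "'a::{real_algebra, ordered_real_vector, lattice}"
  assumes fa: "f_algebra TYPE('a)" and sp: "semiprime TYPE('a)"
    and u: "0 \<le> u" and v: "0 \<le> v" and m: "0 \<le> m" and uu: "u * u \<le> m *\<^sub>R u"
  shows "u * v \<le> m *\<^sub>R v"
proof -
  define z where "z = u * v - m *\<^sub>R v"
  have "(u * u) * v \<le> (m *\<^sub>R u) * v"
    using f_algebra_mult_right_mono[OF fa uu v] .
  then have "u * z \<le> 0"
    by (simp add: z_def algebra_simps)
  then have "inf u (pos_part z) = 0"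
    by (intro semiprime_f_algebra_mult_eq_0_imp_disjoint[OF fa sp u pos_part_nonneg]
        f_algebra_mult_pos_part_eq_0[OF fa u])
  then have "inf (u * v) (pos_part z) = 0"
    by (rule f_algebra_disjoint_mult(1)[OF fa _ v])
  moreover have "pos_part z \<le> u * v"
    using f_algebra_mult_nonneg[OF fa u v] scaleR_nonneg_nonneg[OF m v]
    by (simp add: pos_part_le_iff z_def)
  ultimately have "pos_part z = 0"
    by (simp add: inf_absorb2)
  then show ?thesis
    by (simp add: pos_part_eq_0_iff z_def)
qed

theorem lemma5:
  fixes a :: "'a::{real_algebra, ordered_real_vector, lattice}"
  assumes "f_algebra TYPE('a)"
    and "archimedean_vl TYPE('a)"
    and "semiprime TYPE('a)"
  shows "(\<exists>\<mu>>0. a * a \<le> \<mu> *\<^sub>R labs a) \<longleftrightarrow>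
         (\<forall>x :: 'a. \<exists>l>0. labs (a * x) \<le> l *\<^sub>R labs x)"
proof
  assume "\<exists>\<mu>>0. a * a \<le> \<mu> *\<^sub>R labs a"
  then obtain \<mu> where "\<mu> > 0" and "a * a \<le> \<mu> *\<^sub>R labs a"
    by blast
  then have "labs a * labs a \<le> \<mu> *\<^sub>R labs a"
    by (simp only: f_algebra_labs_mult_self[OF assms(1)])
  show "\<forall>x. \<exists>l>0. labs (a * x) \<le> l *\<^sub>R labs x"
  proof
    fix x :: 'a
    have "labs (a * x) \<le> labs a * labs x"
      by (rule f_algebra_labs_mult_le[OF assms(1)])
    also have "\<dots> \<le> \<mu> *\<^sub>R labs x"
      using \<open>\<mu> > 0\<close> \<open>labs a * labs a \<le> \<mu> *\<^sub>R labs a\<close>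
      by (simp add: semiprime_f_algebra_mult_le_scaleR[OF assms(1,3) labs_nonneg labs_nonneg])
    finally show "\<exists>l>0. labs (a * x) \<le> l *\<^sub>R labs x"
      using \<open>\<mu> > 0\<close> by blast
  qed
next
  assume "\<forall>x. \<exists>l>0. labs (a * x) \<le> l *\<^sub>R labs x"
  then obtain l where "l > 0" and "labs (a * a) \<le> l *\<^sub>R labs a"
    by blast
  moreover have "a * a \<le> labs (a * a)"
    unfolding labs_def by (rule sup_ge1)
  ultimately show "\<exists>\<mu>>0. a * a \<le> \<mu> *\<^sub>R labs a"
    using order_trans by blast
qed

end
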